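(* Under the same setting as Lemma 2.8 ($c\ge0$, $d\in\{0,1,2,\dots\}$, $\lambda>0$, $q=e^{-\lambda/N}$, $\mathsf{s}=e^{-\lambda}$, fixed integers $p\ge1$, $0\le i\le p$), as $N\to\infty$, $$\sum_{j=0}^{N-1}f_i^{(c,d)}(j)=\Big(\frac{N}{\lambda}\Big)^{p+1}\frac{1}{i!(p-i)!}\Big(\mathcal{B}_{i,0}+\mathcal{B}_{i,1}\frac{\lambda}{N}+O(N^{-2})\Big),$$ where $\mathcal{B}_{i,0}=\lambda\mathcal{A}_{i,0}$ and $\mathcal{B}_{i,1}=\lambda\big(\mathcal{A}^{(1)}_{i,1}+\mathcal{A}^{(2)}_{i,1}+\mathcal{A}^{(3)}_{i,1}\big)-\frac12(1-\mathsf{s}^{c+1})^i(1-\mathsf{s})^{p-i}\mathsf{s}^{p+c(p-i)}+\frac12(1-\mathsf{s}^c)^p\delta_{i,p}$.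
   Context: For real $x$ and integer $m\ge0$ define $\begin{bmatrix} x\\ m\end{bmatrix}_q=\prod_{k=1}^{m}\frac{1-q^{x-m+k}}{1-q^{k}}$. For real $y\ge0$, $f_i^{(c,d)}(y)=q^{(cN+d)(p-i)+py}\begin{bmatrix} cN+d+y\\ i\end{bmatrix}_q\begin{bmatrix} p-i+y\\ p-i\end{bmatrix}_q$. The constants are $\mathcal{A}_{i,0}=\mathsf{s}^{c(p-i)}\int_0^1\mathsf{s}^{pt}(1-\mathsf{s}^t)^{p-i}(1-\mathsf{s}^{c+t})^i\,dt$, $\mathcal{A}^{(1)}_{i,1}=\mathsf{s}^{c(p-i+1)}\frac{i(2d-i+1)}{2}\int_0^1\mathsf{s}^{(p+1)t}(1-\mathsf{s}^t)^{p-i}(1-\mathsf{s}^{c+t})^{i-1}\,dt$, $\mathcal{A}^{(2)}_{i,1}=\mathsf{s}^{c(p-i)}\frac{(p-i)(p-i+1)}{2}\int_0^1\mathsf{s}^{(p+1)t}(1-\mathsf{s}^t)^{p-i-1}(1-\mathsf{s}^{c+t})^{i}\,dt$, $\mathcal{A}^{(3)}_{i,1}=\frac{4di+2i^2+p-4dp-2ip+p^2}{4}\mathcal{A}_{i,0}$. $\delta$ is the Kronecker delta. *)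

theory Defs
  imports "HOL-Analysis.Analysis" "HOL-Library.Landau_Symbols"
begin

definition qbinom :: "real \<Rightarrow> real \<Rightarrow> nat \<Rightarrow> real" where
  "qbinom q x m = (\<Prod>k=1..m. (1 - q powr (x - real m + real k)) / (1 - q ^ k))"

definition fcd :: "real \<Rightarrow> nat \<Rightarrow> real \<Rightarrow> nat \<Rightarrow> nat \<Rightarrow> nat \<Rightarrow> real \<Rightarrow> real" where
  "fcd q N c d p i y =
     q powr ((c * real N + real d) * real (p - i) + real p * y)
     * qbinom q (c * real N + real d + y) i
     * qbinom q (real (p - i) + y) (p - i)"

definition A0 :: "real \<Rightarrow> real \<Rightarrow> nat \<Rightarrow> nat \<Rightarrow> real" where
  "A0 s c p i = s powr (c * real (p - i)) *
     integral {0..1} (\<lambda>t. s powr (real p * t) * (1 - s powr t) ^ (p - i) * (1 - s powr (c + t)) ^ i)"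

definition A1_1 :: "real \<Rightarrow> real \<Rightarrow> nat \<Rightarrow> nat \<Rightarrow> nat \<Rightarrow> real" where
  "A1_1 s c d p i = s powr (c * (real p - real i + 1)) *
     (real i * (2 * real d - real i + 1) / 2) *
     integral {0..1} (\<lambda>t. s powr ((real p + 1) * t) * (1 - s powr t) ^ (p - i) * (1 - s powr (c + t)) ^ (i - 1))"

definition A1_2 :: "real \<Rightarrow> real \<Rightarrow> nat \<Rightarrow> nat \<Rightarrow> real" where
  "A1_2 s c p i = s powr (c * real (p - i)) *
     (real (p - i) * (real (p - i) + 1) / 2) *
     integral {0..1} (\<lambda>t. s powr ((real p + 1) * t) * (1 - s powr t) ^ (p - i - 1) * (1 - s powr (c + t)) ^ i)"

definition A1_3 :: "real \<Rightarrow> real \<Rightarrow> nat \<Rightarrow> nat \<Rightarrow> nat \<Rightarrow> real" where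
  "A1_3 s c d p i = (4 * real d * real i + 2 * (real i)^2 + real p - 4 * real d * real p
       - 2 * real i * real p + (real p)^2) / 4 * A0 s c p i"

definition B0 :: "real \<Rightarrow> real \<Rightarrow> nat \<Rightarrow> nat \<Rightarrow> real" where
  "B0 lam c p i = lam * A0 (exp (-lam)) c p i"

definition B1 :: "real \<Rightarrow> real \<Rightarrow> nat \<Rightarrow> nat \<Rightarrow> nat \<Rightarrow> real" where
  "B1 lam c d p i = (let s = exp (-lam) in
     lam * (A1_1 s c d p i + A1_2 s c p i + A1_3 s c d p i)
     - 1/2 * (1 - s powr (c + 1)) ^ i * (1 - s) ^ (p - i) * s powr (real p + c * real (p - i))
     + 1/2 * (1 - s powr c) ^ p * (if i = p then 1 else 0))"

end

(* Put h = lam / N and q = exp (- h). Up to the factor 1 / denom h, a product of terms 1 - q^k,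
   the summand f(y) is a polynomial Q h x in x = q^y of degree at most 2p, without constant term,
   whose coefficients a_m(h) stay bounded as h -> 0. Summing the geometric series in x gives the
   exact identity
     h^(p+1) i! (p-i)! sum_{j<N} f(j) = W h * V h,
   where W h = prod_k hk / (1 - e^(-hk)) and V h = sum_m a_m(h) (1 - s^m) h / (1 - e^(-hm)).
   Since h / (1 - e^(-hm)) = 1/m + h/2 + O(h^2), V h equals lam times the integral of Q h (e^(-lam t))
   over [0,1] plus h/2 (Q h 1 - Q h s), up to O(h^2). Both terms are then expanded to first order
   using Q h x = Q0 x + h Q1 x + O(h^2) uniformly for x in [0,1]. *)

theory Submission
  imports Defs "HOL-Real_Asymp.Real_Asymp" "HOL-Computational_Algebra.Polynomial"
begin

section \<open>First-order expansions as \<open>h \<rightarrow> 0\<^sup>+\<close>\<close>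

text \<open>The coefficients are bounded on \<open>X\<close> so that products of uniform expansions stay uniform.\<close>

definition expansion_on :: "'a set \<Rightarrow> (real \<Rightarrow> 'a \<Rightarrow> real) \<Rightarrow> ('a \<Rightarrow> real) \<Rightarrow> ('a \<Rightarrow> real) \<Rightarrow> bool" where
  "expansion_on X f a b \<longleftrightarrow> (\<exists>M. \<forall>x\<in>X. \<bar>a x\<bar> \<le> M \<and> \<bar>b x\<bar> \<le> M) \<and>
     (\<exists>C. \<forall>\<^sub>F h in at_right 0. \<forall>x\<in>X. \<bar>f h x - a x - h * b x\<bar> \<le> C * h\<^sup>2)"

definition expansion :: "(real \<Rightarrow> real) \<Rightarrow> real \<Rightarrow> real \<Rightarrow> bool" where
  "expansion f a b \<longleftrightarrow> (\<lambda>h. f h - a - h * b) \<in> O[at_right 0](\<lambda>h. h\<^sup>2)"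

lemma eventually_at_right_0_less_1: "\<forall>\<^sub>F h in at_right (0::real). 0 < h \<and> h < 1"
  by (simp add: eventually_at_right_field) (rule exI[of _ 1], auto)

lemma abs_mult_le_mult: "\<bar>u\<bar> \<le> U \<Longrightarrow> \<bar>v\<bar> \<le> V \<Longrightarrow> \<bar>u * v\<bar> \<le> U * (V::real)"
  unfolding abs_mult by (rule mult_mono') auto

lemma expansion_on_cong:
  assumes "expansion_on X f a b"
    and "\<And>x. x \<in> X \<Longrightarrow> a x = a' x" "\<And>x. x \<in> X \<Longrightarrow> b x = b' x"
    and "\<And>h x. 0 < h \<Longrightarrow> x \<in> X \<Longrightarrow> f h x = f' h x"
  shows "expansion_on X f' a' b'"
proof -
  from assms(1) obtain M C where M: "\<forall>x\<in>X. \<bar>a x\<bar> \<le> M \<and> \<bar>b x\<bar> \<le> M"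
    and C: "\<forall>\<^sub>F h in at_right 0. \<forall>x\<in>X. \<bar>f h x - a x - h * b x\<bar> \<le> C * h\<^sup>2"
    unfolding expansion_on_def by blast
  have "\<forall>\<^sub>F h in at_right 0. \<forall>x\<in>X. \<bar>f' h x - a' x - h * b' x\<bar> \<le> C * h\<^sup>2"
    using C eventually_at_right_0_less_1 by eventually_elim (use assms in auto)
  moreover have "\<forall>x\<in>X. \<bar>a' x\<bar> \<le> M \<and> \<bar>b' x\<bar> \<le> M"
    using M assms(2,3) by auto
  ultimately show ?thesis
    unfolding expansion_on_def by blast
qed

lemma expansion_on_const:
  assumes "\<And>x. x \<in> X \<Longrightarrow> \<bar>a x\<bar> \<le> M"
  shows "expansion_on X (\<lambda>h. a) a (\<lambda>_. 0)"
proof -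
  have "\<forall>x\<in>X. \<bar>a x\<bar> \<le> \<bar>M\<bar> \<and> \<bar>0::real\<bar> \<le> \<bar>M\<bar>"
    using assms by force
  moreover have "\<forall>\<^sub>F h in at_right 0. \<forall>x\<in>X. \<bar>a x - a x - h * 0\<bar> \<le> 0 * h\<^sup>2"
    by simp
  ultimately show ?thesis
    unfolding expansion_on_def by blast
qed

lemma expansion_on_add:
  assumes f: "expansion_on X f a b" and g: "expansion_on X g c e"
  shows "expansion_on X (\<lambda>h x. f h x + g h x) (\<lambda>x. a x + c x) (\<lambda>x. b x + e x)"
proof -
  from f obtain M1 C1 where M1: "\<forall>x\<in>X. \<bar>a x\<bar> \<le> M1 \<and> \<bar>b x\<bar> \<le> M1"
    and C1: "\<forall>\<^sub>F h in at_right 0. \<forall>x\<in>X. \<bar>f h x - a x - h * b x\<bar> \<le> C1 * h\<^sup>2"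
    unfolding expansion_on_def by blast
  from g obtain M2 C2 where M2: "\<forall>x\<in>X. \<bar>c x\<bar> \<le> M2 \<and> \<bar>e x\<bar> \<le> M2"
    and C2: "\<forall>\<^sub>F h in at_right 0. \<forall>x\<in>X. \<bar>g h x - c x - h * e x\<bar> \<le> C2 * h\<^sup>2"
    unfolding expansion_on_def by blast
  have "\<forall>\<^sub>F h in at_right 0. \<forall>x\<in>X.
      \<bar>f h x + g h x - (a x + c x) - h * (b x + e x)\<bar> \<le> (C1 + C2) * h\<^sup>2"
    using C1 C2
  proof eventually_elim
    case (elim h)
    show ?case
    proof
      fix x assume "x \<in> X"
      then have "\<bar>f h x - a x - h * b x\<bar> \<le> C1 * h\<^sup>2" "\<bar>g h x - c x - h * e x\<bar> \<le> C2 * h\<^sup>2"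
        using elim by auto
      moreover have "f h x + g h x - (a x + c x) - h * (b x + e x)
          = (f h x - a x - h * b x) + (g h x - c x - h * e x)"
        by (simp add: algebra_simps)
      ultimately show "\<bar>f h x + g h x - (a x + c x) - h * (b x + e x)\<bar> \<le> (C1 + C2) * h\<^sup>2"
        by (simp add: distrib_right)
    qed
  qed
  moreover have "\<forall>x\<in>X. \<bar>a x + c x\<bar> \<le> M1 + M2 \<and> \<bar>b x + e x\<bar> \<le> M1 + M2"
    using M1 M2 by force
  ultimately show ?thesis
    unfolding expansion_on_def by blast
qed

lemma product_remainder_le:
  fixes a b c e F G h M1 M2 C1 C2 :: real
  assumes h: "0 < h" "h < 1"
    and ab: "\<bar>a\<bar> \<le> M1" "\<bar>b\<bar> \<le> M1" and ce: "\<bar>c\<bar> \<le> M2" "\<bar>e\<bar> \<le> M2"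
    and F: "\<bar>F\<bar> \<le> C1 * h\<^sup>2" and G: "\<bar>G\<bar> \<le> C2 * h\<^sup>2"
  shows "\<bar>(a + h * b + F) * (c + h * e + G) - a * c - h * (a * e + b * c)\<bar>
    \<le> (M1 * M2 + 2 * M1 * C2 + 2 * C1 * M2 + C1 * C2) * h\<^sup>2"
proof -
  have h2: "0 < h\<^sup>2" "h\<^sup>2 \<le> 1"
    using h by (simp_all add: power_le_one)
  have "0 \<le> C2 * h\<^sup>2"
    using G abs_ge_zero[of G] by linarith
  then have "0 \<le> C2"
    using h2 by (simp add: zero_le_mult_iff)
  then have G1: "\<bar>G\<bar> \<le> C2"
    using G h2 mult_left_le[of "h\<^sup>2" C2] by linarith
  have "\<bar>h * b\<bar> \<le> M1" "\<bar>h * e\<bar> \<le> M2"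
    using h ab ce by (simp_all add: abs_mult mult_le_one order_trans[OF mult_left_le_one_le])
  then have "\<bar>a + h * b\<bar> \<le> 2 * M1" "\<bar>c + h * e\<bar> \<le> 2 * M2"
    using ab ce by linarith+
  then have t2: "\<bar>(a + h * b) * G\<bar> \<le> 2 * M1 * (C2 * h\<^sup>2)"
    and t3: "\<bar>F * (c + h * e)\<bar> \<le> C1 * h\<^sup>2 * (2 * M2)"
    and t4: "\<bar>F * G\<bar> \<le> C1 * h\<^sup>2 * C2"
    using F G G1 by (auto intro: abs_mult_le_mult)
  have t1: "\<bar>h\<^sup>2 * (b * e)\<bar> \<le> h\<^sup>2 * (M1 * M2)"
    using abs_mult_le_mult[OF ab(2) ce(2)] h2 by (simp add: abs_mult mult_left_mono)
  have "(a + h * b + F) * (c + h * e + G) - a * c - h * (a * e + b * c)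
      = h\<^sup>2 * (b * e) + (a + h * b) * G + F * (c + h * e) + F * G"
    by (simp add: algebra_simps power2_eq_square)
  moreover have "\<bar>x + y + z + w\<bar> \<le> \<bar>x\<bar> + \<bar>y\<bar> + \<bar>z\<bar> + \<bar>w\<bar>" for x y z w :: real
    using abs_triangle_ineq[of "x + y + z" w] abs_triangle_ineq[of "x + y" z] abs_triangle_ineq[of x y]
    by linarith
  ultimately have "\<bar>(a + h * b + F) * (c + h * e + G) - a * c - h * (a * e + b * c)\<bar>
      \<le> \<bar>h\<^sup>2 * (b * e)\<bar> + \<bar>(a + h * b) * G\<bar> + \<bar>F * (c + h * e)\<bar> + \<bar>F * G\<bar>"
    by simp
  also have "\<dots> \<le> h\<^sup>2 * (M1 * M2) + 2 * M1 * (C2 * h\<^sup>2) + C1 * h\<^sup>2 * (2 * M2) + C1 * h\<^sup>2 * C2"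
    using t1 t2 t3 t4 by linarith
  also have "\<dots> = (M1 * M2 + 2 * M1 * C2 + 2 * C1 * M2 + C1 * C2) * h\<^sup>2"
    by (simp add: algebra_simps)
  finally show ?thesis .
qed

lemma expansion_on_mult:
  assumes f: "expansion_on X f a b" and g: "expansion_on X g c e"
  shows "expansion_on X (\<lambda>h x. f h x * g h x) (\<lambda>x. a x * c x) (\<lambda>x. a x * e x + b x * c x)"
proof -
  from f obtain M1 C1 where M1: "\<forall>x\<in>X. \<bar>a x\<bar> \<le> M1 \<and> \<bar>b x\<bar> \<le> M1"
    and C1: "\<forall>\<^sub>F h in at_right 0. \<forall>x\<in>X. \<bar>f h x - a x - h * b x\<bar> \<le> C1 * h\<^sup>2"
    unfolding expansion_on_def by blast
  from g obtain M2 C2 where M2: "\<forall>x\<in>X. \<bar>c x\<bar> \<le> M2 \<and> \<bar>e x\<bar> \<le> M2"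
    and C2: "\<forall>\<^sub>F h in at_right 0. \<forall>x\<in>X. \<bar>g h x - c x - h * e x\<bar> \<le> C2 * h\<^sup>2"
    unfolding expansion_on_def by blast
  have "\<forall>\<^sub>F h in at_right 0. \<forall>x\<in>X. \<bar>f h x * g h x - a x * c x - h * (a x * e x + b x * c x)\<bar>
      \<le> (M1 * M2 + 2 * M1 * C2 + 2 * C1 * M2 + C1 * C2) * h\<^sup>2"
    using C1 C2 eventually_at_right_0_less_1
  proof eventually_elim
    case (elim h)
    show ?case
    proof
      fix x assume "x \<in> X"
      then show "\<bar>f h x * g h x - a x * c x - h * (a x * e x + b x * c x)\<bar>
          \<le> (M1 * M2 + 2 * M1 * C2 + 2 * C1 * M2 + C1 * C2) * h\<^sup>2"
        using product_remainder_le[of h "a x" M1 "b x" "c x" M2 "e x"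
            "f h x - a x - h * b x" C1 "g h x - c x - h * e x" C2] elim M1 M2
        by simp
    qed
  qed
  moreover have "\<forall>x\<in>X. \<bar>a x * c x\<bar> \<le> 2 * (M1 * M2) \<and> \<bar>a x * e x + b x * c x\<bar> \<le> 2 * (M1 * M2)"
  proof
    fix x assume "x \<in> X"
    then have "\<bar>a x * c x\<bar> \<le> M1 * M2" "\<bar>a x * e x\<bar> \<le> M1 * M2" "\<bar>b x * c x\<bar> \<le> M1 * M2"
      using M1 M2 abs_mult_le_mult by blast+
    then show "\<bar>a x * c x\<bar> \<le> 2 * (M1 * M2) \<and> \<bar>a x * e x + b x * c x\<bar> \<le> 2 * (M1 * M2)"
      using abs_triangle_ineq[of "a x * e x" "b x * c x"] abs_ge_zero[of "a x * c x"] by linarith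
  qed
  ultimately show ?thesis
    unfolding expansion_on_def by blast
qed

lemma expansion_on_prod:
  assumes "finite K" "\<And>k. k \<in> K \<Longrightarrow> expansion_on X (f k) A (\<lambda>x. c k * B x)"
  shows "expansion_on X (\<lambda>h x. \<Prod>k\<in>K. f k h x) (\<lambda>x. A x ^ card K)
    (\<lambda>x. (\<Sum>k\<in>K. c k) * B x * A x ^ (card K - 1))"
  using assms
proof (induction K rule: finite_induct)
  case empty
  show ?case
    using expansion_on_const[of X "\<lambda>_. 1" 1] by simp
next
  case (insert k K)
  have "expansion_on X (\<lambda>h x. f k h x * (\<Prod>k\<in>K. f k h x)) (\<lambda>x. A x * A x ^ card K)
     (\<lambda>x. A x * ((\<Sum>k\<in>K. c k) * B x * A x ^ (card K - 1)) + c k * B x * A x ^ card K)"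
    using insert by (intro expansion_on_mult) auto
  then show ?case
  proof (rule expansion_on_cong)
    fix x
    show "A x * A x ^ card K = A x ^ card (insert k K)"
      using insert by simp
    show "A x * ((\<Sum>k\<in>K. c k) * B x * A x ^ (card K - 1)) + c k * B x * A x ^ card K
      = (\<Sum>k\<in>insert k K. c k) * B x * A x ^ (card (insert k K) - 1)"
      using insert by (cases "card K") (auto simp: algebra_simps)
    fix h
    show "f k h x * (\<Prod>k\<in>K. f k h x) = (\<Prod>k\<in>insert k K. f k h x)"
      using insert by simp
  qed
qed

lemma expansion_on_compose:
  assumes "expansion_on X f a b" "g ` Y \<subseteq> X"
  shows "expansion_on Y (\<lambda>h y. f h (g y)) (\<lambda>y. a (g y)) (\<lambda>y. b (g y))"
proof -
  from assms(1) obtain M C where M: "\<forall>x\<in>X. \<bar>a x\<bar> \<le> M \<and> \<bar>b x\<bar> \<le> M"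
    and C: "\<forall>\<^sub>F h in at_right 0. \<forall>x\<in>X. \<bar>f h x - a x - h * b x\<bar> \<le> C * h\<^sup>2"
    unfolding expansion_on_def by blast
  have "\<forall>\<^sub>F h in at_right 0. \<forall>y\<in>Y. \<bar>f h (g y) - a (g y) - h * b (g y)\<bar> \<le> C * h\<^sup>2"
    using C by eventually_elim (use assms(2) in blast)
  moreover have "\<forall>y\<in>Y. \<bar>a (g y)\<bar> \<le> M \<and> \<bar>b (g y)\<bar> \<le> M"
    using M assms(2) by blast
  ultimately show ?thesis
    unfolding expansion_on_def by blast
qed

lemma expansionI:
  assumes "\<forall>\<^sub>F h in at_right 0. \<bar>f h - a - h * b\<bar> \<le> C * h\<^sup>2"
  shows "expansion f a b"
proof -
  have "\<forall>\<^sub>F h in at_right 0. norm (f h - a - h * b) \<le> (\<bar>C\<bar> + 1) * norm (h\<^sup>2)"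
    using assms
  proof eventually_elim
    case (elim h)
    have "C * h\<^sup>2 \<le> (\<bar>C\<bar> + 1) * h\<^sup>2"
      by (intro mult_right_mono) auto
    then show ?case
      using elim by simp
  qed
  then show ?thesis
    unfolding expansion_def by (intro landau_o.bigI[of "\<bar>C\<bar> + 1"]) auto
qed

lemma expansion_imp_expansion_on:
  assumes "expansion f a b"
  shows "expansion_on X (\<lambda>h x. f h) (\<lambda>x. a) (\<lambda>x. b)"
proof -
  obtain C where "\<forall>\<^sub>F h in at_right 0. norm (f h - a - h * b) \<le> C * norm (h\<^sup>2)"
    using assms unfolding expansion_def by (elim landau_o.bigE)
  then have "\<forall>\<^sub>F h in at_right 0. \<forall>x\<in>X. \<bar>f h - a - h * b\<bar> \<le> C * h\<^sup>2"
    by eventually_elim simp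
  moreover have "\<forall>x\<in>X. \<bar>a\<bar> \<le> \<bar>a\<bar> + \<bar>b\<bar> \<and> \<bar>b\<bar> \<le> \<bar>a\<bar> + \<bar>b\<bar>"
    by simp
  ultimately show ?thesis
    unfolding expansion_on_def by blast
qed

lemma expansion_on_at_point:
  assumes "expansion_on X f a b" "x \<in> X"
  shows "expansion (\<lambda>h. f h x) (a x) (b x)"
proof -
  obtain C where "\<forall>\<^sub>F h in at_right 0. \<forall>x\<in>X. \<bar>f h x - a x - h * b x\<bar> \<le> C * h\<^sup>2"
    using assms(1) unfolding expansion_on_def by blast
  then have "\<forall>\<^sub>F h in at_right 0. \<bar>f h x - a x - h * b x\<bar> \<le> C * h\<^sup>2"
    by eventually_elim (use assms(2) in blast)
  then show ?thesis
    by (rule expansionI)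
qed

text \<open>Scalar expansions are uniform expansions over a one-point set; this transfers the
  algebra of \<^const>\<open>expansion_on\<close> to \<^const>\<open>expansion\<close>.\<close>

lemma expansion_iff: "expansion f a b \<longleftrightarrow> expansion_on {()} (\<lambda>h x. f h) (\<lambda>x. a) (\<lambda>x. b)"
  using expansion_imp_expansion_on expansion_on_at_point by fastforce

lemma expansion_const: "expansion (\<lambda>h. a) a 0"
  by (simp add: expansion_def)

lemma expansion_linear: "expansion (\<lambda>h. h * b) 0 b"
  by (simp add: expansion_def)

lemma expansion_add:
  "expansion f a b \<Longrightarrow> expansion g c e \<Longrightarrow> expansion (\<lambda>h. f h + g h) (a + c) (b + e)"
  unfolding expansion_iff by (drule (1) expansion_on_add) simp

lemma expansion_mult:
  "expansion f a b \<Longrightarrow> expansion g c e \<Longrightarrow> expansion (\<lambda>h. f h * g h) (a * c) (a * e + b * c)"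
  unfolding expansion_iff by (drule (1) expansion_on_mult) simp

lemma expansion_cong:
  assumes "expansion f a b" "a = a'" "b = b'" "\<And>h. 0 < h \<Longrightarrow> f h = f' h"
  shows "expansion f' a' b'"
  using assms unfolding expansion_iff by (auto elim!: expansion_on_cong)

lemma expansion_integral:
  fixes f :: "real \<Rightarrow> real \<Rightarrow> real"
  assumes "a \<le> b" and f: "expansion_on {a..b} f A B"
    and cont: "\<And>h. 0 < h \<Longrightarrow> continuous_on {a..b} (f h)"
      "continuous_on {a..b} A" "continuous_on {a..b} B"
  shows "expansion (\<lambda>h. integral {a..b} (f h)) (integral {a..b} A) (integral {a..b} B)"
proof -
  from f obtain C where C: "\<forall>\<^sub>F h in at_right 0. \<forall>x\<in>{a..b}. \<bar>f h x - A x - h * B x\<bar> \<le> C * h\<^sup>2"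
    unfolding expansion_on_def by blast
  have "\<forall>\<^sub>F h in at_right 0.
      \<bar>integral {a..b} (f h) - integral {a..b} A - h * integral {a..b} B\<bar> \<le> (C * (b - a)) * h\<^sup>2"
    using C eventually_at_right_0_less_1
  proof eventually_elim
    case (elim h)
    have int: "f h integrable_on {a..b}" "A integrable_on {a..b}" "(\<lambda>x. h * B x) integrable_on {a..b}"
      using cont elim by (auto intro!: integrable_continuous_real continuous_intros)
    then have "integral {a..b} (f h) - integral {a..b} A - h * integral {a..b} B
        = integral {a..b} (\<lambda>x. f h x - A x - h * B x)"
      by (simp add: integral_diff integrable_diff)
    also have "norm \<dots> \<le> integral {a..b} (\<lambda>x. C * h\<^sup>2)"
      using int elim by (intro integral_norm_bound_integral) (auto intro!: integrable_diff)
    finally show ?case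
      using \<open>a \<le> b\<close> by (simp add: algebra_simps)
  qed
  then show ?thesis
    by (rule expansionI)
qed

lemma expansion_prod:
  assumes "finite K" "\<And>k. k \<in> K \<Longrightarrow> expansion (f k) 1 (b k)"
  shows "expansion (\<lambda>h. \<Prod>k\<in>K. f k h) 1 (\<Sum>k\<in>K. b k)"
proof -
  have "expansion_on {()} (\<lambda>h x. f k h) (\<lambda>x. 1) (\<lambda>x. b k * 1)" if "k \<in> K" for k
    using assms(2)[OF that] by (simp add: expansion_iff)
  then have "expansion_on {()} (\<lambda>h x. \<Prod>k\<in>K. f k h) (\<lambda>x. 1 ^ card K)
      (\<lambda>x. (\<Sum>k\<in>K. b k) * 1 * 1 ^ (card K - 1))"
    using assms(1) by (rule expansion_on_prod[rotated])
  then show ?thesis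
    unfolding expansion_iff by simp
qed

lemma expansion_diff:
  assumes "expansion f a b" "expansion g c e"
  shows "expansion (\<lambda>h. f h - g h) (a - c) (b - e)"
  using sum_in_bigo(2)[OF assms[unfolded expansion_def]]
  unfolding expansion_def by (simp add: algebra_simps)

lemma expansion_exp: "expansion (\<lambda>h. exp (- (h * a))) 1 (- a)"
  unfolding expansion_def by real_asymp

lemma expansion_div_one_minus_exp:
  assumes "m > 0"
  shows "expansion (\<lambda>h. h / (1 - exp (- (h * m)))) (1 / m) (1 / 2)"
proof -
  have "(\<lambda>y::real. y / (1 - exp (- y)) - 1 - y / 2) \<in> O[at_right 0](\<lambda>y. y\<^sup>2)"
    by real_asymp
  moreover have "filterlim (\<lambda>h. h * m) (at_right 0) (at_right 0)"
    using assms by real_asymp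
  ultimately have "(\<lambda>h. h * m / (1 - exp (- (h * m))) - 1 - h * m / 2) \<in> O[at_right 0](\<lambda>h. (h * m)\<^sup>2)"
    by (rule landau_o.big.compose)
  then have "(\<lambda>h. 1 / m * (h * m / (1 - exp (- (h * m))) - 1 - h * m / 2)) \<in> O[at_right 0](\<lambda>h. m\<^sup>2 * h\<^sup>2)"
    using assms by (simp add: power_mult_distrib mult.commute)
  then show ?thesis
    unfolding expansion_def using assms by (simp add: field_simps)
qed

lemma expansion_on_one_minus_mult_exp:
  assumes "\<And>x. x \<in> X \<Longrightarrow> \<bar>g x\<bar> \<le> M"
  shows "expansion_on X (\<lambda>h x. 1 - g x * exp (- (h * a))) (\<lambda>x. 1 - g x) (\<lambda>x. a * g x)"
proof -
  have "expansion_on X (\<lambda>h x. 1 + (- g x) * exp (- (h * a)))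
      (\<lambda>x. 1 + (- g x * 1)) (\<lambda>x. 0 + (- g x * - a + 0 * 1))"
    using assms
    by (intro expansion_on_add expansion_on_mult expansion_imp_expansion_on[OF expansion_exp]
        expansion_on_const[of X "\<lambda>_. 1" 1] expansion_on_const[of X "\<lambda>x. - g x" M]) auto
  then show ?thesis
    by (rule expansion_on_cong) auto
qed

section \<open>Coefficients of products of linear polynomials\<close>

lemma abs_coeff_mult_linear_le:
  fixes P :: "'a::linordered_idom poly"
  assumes "\<And>m. \<bar>coeff P m\<bar> \<le> M"
  shows "\<bar>coeff (P * [:a, b:]) m\<bar> \<le> M * (\<bar>a\<bar> + \<bar>b\<bar>)"
proof -
  have M: "0 \<le> M"
    using assms[of 0] by linarith
  have "coeff (P * [:a, b:]) m = a * coeff P m + (case m of 0 \<Rightarrow> 0 | Suc n \<Rightarrow> b * coeff P n)"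
    by (simp add: coeff_pCons split: nat.split)
  moreover have "\<bar>a * coeff P m\<bar> \<le> \<bar>a\<bar> * M"
    using assms[of m] by (simp add: abs_mult mult_left_mono)
  moreover have "\<bar>case m of 0 \<Rightarrow> 0 | Suc n \<Rightarrow> b * coeff P n\<bar> \<le> \<bar>b\<bar> * M"
    using assms M by (auto simp: abs_mult mult_left_mono split: nat.split)
  ultimately show ?thesis
    by (simp add: algebra_simps)
qed

lemma abs_coeff_mult_prod_linear_le:
  fixes P :: "'a::linordered_idom poly"
  assumes "finite K" "\<And>m. \<bar>coeff P m\<bar> \<le> M"
  shows "\<bar>coeff (P * (\<Prod>k\<in>K. [:a k, b k:])) m\<bar> \<le> M * (\<Prod>k\<in>K. \<bar>a k\<bar> + \<bar>b k\<bar>)"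
  using assms(1)
proof (induction K arbitrary: m rule: finite_induct)
  case empty
  then show ?case
    using assms(2) by simp
next
  case (insert k K)
  then have "\<bar>coeff ((P * (\<Prod>k\<in>K. [:a k, b k:])) * [:a k, b k:]) m\<bar>
      \<le> M * (\<Prod>k\<in>K. \<bar>a k\<bar> + \<bar>b k\<bar>) * (\<bar>a k\<bar> + \<bar>b k\<bar>)"
    by (intro abs_coeff_mult_linear_le)
  then show ?case
    using insert by (simp add: algebra_simps)
qed

lemma poly_eq_sum_coeff_from_1:
  fixes P :: "'a::comm_semiring_1 poly"
  assumes "degree P \<le> n" "coeff P 0 = 0"
  shows "poly P x = (\<Sum>m=1..n. coeff P m * x ^ m)"
proof -
  have "poly P x = poly (\<Sum>m\<le>n. monom (coeff P m) m) x"
    using poly_as_sum_of_monoms'[OF assms(1)] by simp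
  also have "\<dots> = (\<Sum>m\<le>n. coeff P m * x ^ m)"
    by (simp add: poly_sum poly_monom)
  also have "{..n} = insert 0 {1..n}"
    by auto
  finally show ?thesis
    using assms(2) by simp
qed

section \<open>The \<open>q\<close>-binomial sum\<close>

lemma gauss_sum_real_from_1: "(\<Sum>k=1..n. real k) = real n * (real n + 1) / 2"
  using double_gauss_sum_from_Suc_0[of n, where ?'a = real] by simp

lemma filterlim_div_real_at_right_0:
  "lam > 0 \<Longrightarrow> filterlim (\<lambda>N. lam / real N :: real) (at_right 0) sequentially"
  by real_asymp

lemma square_div_real_bigo: "lam > 0 \<Longrightarrow> (\<lambda>N. (lam / real N)\<^sup>2) \<in> O(\<lambda>N. 1 / (real N)\<^sup>2)"
  by real_asymp

locale qbinomial_sum =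
  fixes c lam :: real and d p i :: nat
  assumes c_nonneg: "c \<ge> 0" and lam_pos: "lam > 0" and p_pos: "p \<ge> 1" and i_le_p: "i \<le> p"
begin

definition s :: real where "s = exp (- lam)"

text \<open>For \<open>q = exp (- h)\<close> with \<open>h = lam / N\<close> we have \<open>alpha h k = q\<^bsup>cN+d-i+k\<^esup>\<close>,
  \<open>gamma h k = q\<^sup>k\<close> and \<open>beta h = q\<^bsup>(cN+d)(p-i)\<^esup>\<close>, so that \<open>Q h (q\<^sup>y)\<close> is the
  numerator of the summand \<open>f(y)\<close>, while \<open>Q0\<close> and \<open>Q1\<close> are its coefficients of order \<open>h\<^sup>0\<close>
  and \<open>h\<^sup>1\<close>.\<close>

definition alpha :: "real \<Rightarrow> nat \<Rightarrow> real" where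
  "alpha h k = s powr c * exp (- (h * (real d - real i + real k)))"

definition gamma :: "real \<Rightarrow> nat \<Rightarrow> real" where
  "gamma h k = exp (- (h * real k))"

definition beta :: "real \<Rightarrow> real" where
  "beta h = exp (- (h * (real d * real (p - i)))) * s powr (c * real (p - i))"

definition Q :: "real \<Rightarrow> real \<Rightarrow> real" where
  "Q h x = beta h * x ^ p * (\<Prod>k=1..i. 1 - alpha h k * x) * (\<Prod>k=1..p-i. 1 - gamma h k * x)"

definition Qpoly :: "real \<Rightarrow> real poly" where
  "Qpoly h = smult (beta h)
     (monom 1 p * (\<Prod>k=1..i. [:1, - alpha h k:]) * (\<Prod>k=1..p-i. [:1, - gamma h k:]))"

definition Q0 :: "real \<Rightarrow> real" where
  "Q0 x = s powr (c * real (p - i)) * x ^ p * (1 - s powr c * x) ^ i * (1 - x) ^ (p - i)"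

definition Q1 :: "real \<Rightarrow> real" where
  "Q1 x = s powr (c * real (p - i)) * x ^ p *
     (- (real d * real (p - i)) * (1 - s powr c * x) ^ i * (1 - x) ^ (p - i)
      + real i * (2 * real d - real i + 1) / 2 * (s powr c * x) * (1 - s powr c * x) ^ (i - 1) * (1 - x) ^ (p - i)
      + real (p - i) * (real (p - i) + 1) / 2 * x * (1 - x) ^ (p - i - 1) * (1 - s powr c * x) ^ i)"

lemma s_pos: "0 < s" and s_less_1: "s < 1"
  unfolding s_def using lam_pos by auto

lemma s_powr_c_pos: "0 < s powr c" and s_powr_c_le_1: "s powr c \<le> 1"
  using s_pos s_less_1 c_nonneg by (auto intro: powr_le1)

lemma poly_Qpoly: "poly (Qpoly h) x = Q h x"
  unfolding Qpoly_def Q_def by (simp add: poly_prod poly_monom algebra_simps)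

lemma degree_Qpoly: "degree (Qpoly h) \<le> 2 * p"
proof -
  have "degree (\<Prod>k=1..n. [:1, - a k:]) \<le> n" for n and a :: "nat \<Rightarrow> real"
  proof -
    have "degree (\<Prod>k=1..n. [:1, - a k:]) \<le> (\<Sum>k=1..n. degree [:1, - a k:])"
      using degree_prod_sum_le[of "{1..n}" "\<lambda>k. [:1, - a k:]"] by (simp add: o_def)
    also have "\<dots> \<le> (\<Sum>k=1..n. 1)"
      by (intro sum_mono) simp
    finally show ?thesis
      by simp
  qed
  then have "degree (monom 1 p * (\<Prod>k=1..i. [:1, - alpha h k:]) * (\<Prod>k=1..p-i. [:1, - gamma h k:]))
      \<le> p + i + (p - i)"
    by (intro degree_mult_le[THEN order_trans] add_mono degree_monom_le[THEN order_trans]) auto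
  then show ?thesis
    unfolding Qpoly_def using i_le_p degree_smult_le[THEN order_trans] by simp
qed

lemma Q_eq_sum_coeff: "Q h x = (\<Sum>m=1..2*p. coeff (Qpoly h) m * x ^ m)"
proof -
  have "coeff (Qpoly h) 0 = 0"
    unfolding Qpoly_def using p_pos by (simp add: coeff_mult_0)
  from poly_eq_sum_coeff_from_1[OF degree_Qpoly this] show ?thesis
    unfolding poly_Qpoly .
qed

lemma abs_alpha_le: "0 < h \<Longrightarrow> h < 1 \<Longrightarrow> \<bar>alpha h k\<bar> \<le> exp (real i)"
proof -
  assume h: "0 < h" "h < 1"
  have "- (h * (real d - real i + real k)) \<le> h * real i"
    using h by (simp add: algebra_simps)
  also have "\<dots> \<le> real i"
    using h by (simp add: mult_left_le_one_le)
  finally have "exp (- (h * (real d - real i + real k))) \<le> exp (real i)"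
    by simp
  moreover have "s powr c * exp (- (h * (real d - real i + real k)))
      \<le> exp (- (h * (real d - real i + real k)))"
    using s_powr_c_le_1 by (simp add: mult_left_le_one_le)
  moreover have "0 \<le> s powr c * exp (- (h * (real d - real i + real k)))"
    using s_powr_c_pos by simp
  ultimately have "0 \<le> alpha h k" "alpha h k \<le> exp (real i)"
    unfolding alpha_def by linarith+
  then show ?thesis
    by simp
qed

lemma abs_coeff_Qpoly_le:
  assumes h: "0 < h" "h < 1"
  shows "\<bar>coeff (Qpoly h) m\<bar> \<le> (1 + exp (real i)) ^ i * 2 ^ (p - i)"
proof -
  have alpha_part: "\<bar>coeff (monom 1 p * (\<Prod>k=1..i. [:1, - alpha h k:])) m\<bar> \<le> (1 + exp (real i)) ^ i"
    for m
  proof -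
    have "\<bar>coeff (monom 1 p * (\<Prod>k=1..i. [:1, - alpha h k:])) m\<bar>
        \<le> 1 * (\<Prod>k=1..i. \<bar>1\<bar> + \<bar>- alpha h k\<bar>)"
      by (rule abs_coeff_mult_prod_linear_le) (simp_all add: coeff_monom)
    also have "\<dots> \<le> (\<Prod>k=1..i. 1 + exp (real i))"
      unfolding mult_1_left using abs_alpha_le[OF h] by (intro prod_mono) auto
    finally show ?thesis
      by simp
  qed
  have "\<bar>coeff (monom 1 p * (\<Prod>k=1..i. [:1, - alpha h k:]) * (\<Prod>k=1..p-i. [:1, - gamma h k:])) m\<bar>
      \<le> (1 + exp (real i)) ^ i * (\<Prod>k=1..p-i. \<bar>1\<bar> + \<bar>- gamma h k\<bar>)"
    by (rule abs_coeff_mult_prod_linear_le[OF _ alpha_part]) simp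
  also have "\<dots> \<le> (1 + exp (real i)) ^ i * (\<Prod>k=1..p-i. 2)"
    unfolding gamma_def using h by (intro mult_left_mono prod_mono) auto
  finally have "\<bar>coeff (monom 1 p * (\<Prod>k=1..i. [:1, - alpha h k:]) * (\<Prod>k=1..p-i. [:1, - gamma h k:])) m\<bar>
      \<le> (1 + exp (real i)) ^ i * 2 ^ (p - i)"
    by simp
  moreover have "\<bar>beta h\<bar> \<le> 1"
    unfolding beta_def using h s_pos s_less_1 c_nonneg
    by (simp add: abs_mult mult_le_one powr_le1)
  ultimately have "\<bar>beta h\<bar> * \<bar>coeff (monom 1 p * (\<Prod>k=1..i. [:1, - alpha h k:])
      * (\<Prod>k=1..p-i. [:1, - gamma h k:])) m\<bar> \<le> 1 * ((1 + exp (real i)) ^ i * 2 ^ (p - i))"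
    by (intro mult_mono) auto
  then show ?thesis
    unfolding Qpoly_def by (simp add: abs_mult)
qed

definition denom :: "real \<Rightarrow> real" where
  "denom h = (\<Prod>k=1..i. 1 - exp (- (h * real k))) * (\<Prod>k=1..p-i. 1 - exp (- (h * real k)))"

definition W :: "real \<Rightarrow> real" where
  "W h = (\<Prod>k=1..i. h * real k / (1 - exp (- (h * real k)))) *
     (\<Prod>k=1..p-i. h * real k / (1 - exp (- (h * real k))))"

definition V :: "real \<Rightarrow> real" where
  "V h = (\<Sum>m=1..2*p. coeff (Qpoly h) m * (1 - s ^ m) * (h / (1 - exp (- (h * real m)))))"

lemma fcd_eq_Q_div_denom:
  assumes "N > 0" and h: "h = lam / real N"
  shows "fcd (exp (- lam / real N)) N c d p i y = Q h (exp (- (h * y))) / denom h"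
proof -
  have q: "exp (- lam / real N) = exp (- h)" and lam: "lam = h * real N"
    using h assms(1) by simp_all
  have exp_powr: "exp (- h) powr z = exp (- (h * z))" for z
    by (simp add: exp_powr_real)
  have "exp (- h) powr ((c * real N + real d) * real (p - i) + real p * y)
      = beta h * exp (- (h * y)) ^ p"
    unfolding beta_def s_def exp_powr exp_powr_real exp_of_nat_mult[symmetric] mult_exp_exp
    by (simp add: lam algebra_simps)
  moreover have "1 - exp (- h) powr (c * real N + real d + y - real i + real k)
      = 1 - alpha h k * exp (- (h * y))" for k
    unfolding alpha_def s_def exp_powr exp_powr_real mult_exp_exp
    by (simp add: lam algebra_simps)
  moreover have "1 - exp (- h) powr (real (p - i) + y - real (p - i) + real k)
      = 1 - gamma h k * exp (- (h * y))" for k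
    unfolding gamma_def exp_powr by (simp add: exp_add[symmetric] algebra_simps)
  moreover have "1 - exp (- h) ^ k = 1 - exp (- (h * real k))" for k
    by (simp add: exp_of_nat_mult[symmetric] algebra_simps)
  ultimately have "fcd (exp (- lam / real N)) N c d p i y =
      (beta h * exp (- (h * y)) ^ p) *
      ((\<Prod>k=1..i. 1 - alpha h k * exp (- (h * y))) / (\<Prod>k=1..i. 1 - exp (- (h * real k)))) *
      ((\<Prod>k=1..p-i. 1 - gamma h k * exp (- (h * y))) / (\<Prod>k=1..p-i. 1 - exp (- (h * real k))))"
    unfolding fcd_def qbinom_def q prod_dividef by simp
  then show ?thesis
    unfolding Q_def denom_def by (simp add: field_simps)
qed

lemma sum_Q_geometric:
  assumes "N > 0" and h: "h = lam / real N"
  shows "(\<Sum>j<N. Q h (exp (- (h * real j))))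
    = (\<Sum>m=1..2*p. coeff (Qpoly h) m * ((1 - s ^ m) / (1 - exp (- (h * real m)))))"
proof -
  have "(\<Sum>j<N. exp (- (h * real j)) ^ m) = (1 - s ^ m) / (1 - exp (- (h * real m)))"
    if "m \<ge> 1" for m
  proof -
    have "(\<Sum>j<N. exp (- (h * real j)) ^ m) = (\<Sum>j<N. exp (- (h * real m)) ^ j)"
      by (simp add: exp_of_nat_mult[symmetric] algebra_simps)
    also have "\<dots> = (1 - exp (- (h * real m)) ^ N) / (1 - exp (- (h * real m)))"
      using that h assms(1) lam_pos by (subst sum_gp_strict) auto
    also have "exp (- (h * real m)) ^ N = s ^ m"
      using h assms(1) unfolding s_def by (simp add: exp_of_nat_mult[symmetric] algebra_simps)
    finally show ?thesis .
  qed
  then have "(\<Sum>m=1..2*p. coeff (Qpoly h) m * (\<Sum>j<N. exp (- (h * real j)) ^ m))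
      = (\<Sum>m=1..2*p. coeff (Qpoly h) m * ((1 - s ^ m) / (1 - exp (- (h * real m)))))"
    by (intro sum.cong) auto
  then show ?thesis
    unfolding Q_eq_sum_coeff sum_distrib_left by (subst sum.swap) simp
qed

lemma sum_fcd_eq_W_V:
  assumes "N > 0" and h: "h = lam / real N"
  shows "h ^ (p + 1) * (fact i * fact (p - i)) * (\<Sum>j<N. fcd (exp (- lam / real N)) N c d p i (real j))
    = W h * V h"
proof -
  have "h > 0"
    using h assms(1) lam_pos by simp
  then have denom: "denom h \<noteq> 0"
    unfolding denom_def by (auto simp: prod_zero_iff)
  have prod_h: "(\<Prod>k=1..n. h * real k) = h ^ n * fact n" for n
    by (induction n) (simp_all add: prod.nat_ivl_Suc' algebra_simps)
  have W_h: "W h = (h ^ i * fact i) * (h ^ (p - i) * fact (p - i)) / denom h"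
    unfolding W_def denom_def prod_dividef prod_h by simp
  have V_h: "V h = h * (\<Sum>m=1..2*p. coeff (Qpoly h) m * ((1 - s ^ m) / (1 - exp (- (h * real m)))))"
    unfolding V_def sum_distrib_left by (rule sum.cong) auto
  have h_power: "h ^ (p + 1) = h ^ i * h ^ (p - i) * h"
    using i_le_p by (simp add: power_add[symmetric])
  have sum_eq: "(\<Sum>j<N. fcd (exp (- lam / real N)) N c d p i (real j))
      = (\<Sum>m=1..2*p. coeff (Qpoly h) m * ((1 - s ^ m) / (1 - exp (- (h * real m))))) / denom h"
    unfolding fcd_eq_Q_div_denom[OF assms] sum_divide_distrib[symmetric] sum_Q_geometric[OF assms] ..
  show ?thesis
    unfolding sum_eq W_h V_h h_power using denom by (simp add: field_simps)
qed

lemma expansion_on_Q: "expansion_on {0..1} Q Q0 Q1"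
proof -
  let ?b0 = "s powr (c * real (p - i))" and ?D = "real d * real (p - i)"
  have b0: "0 \<le> ?b0" "?b0 \<le> 1"
    using s_pos s_less_1 c_nonneg by (simp_all add: powr_le1)
  have prefactor: "expansion_on {0..1} (\<lambda>h x. exp (- (h * ?D)) * (?b0 * x ^ p))
      (\<lambda>x. 1 * (?b0 * x ^ p)) (\<lambda>x. 1 * 0 + - ?D * (?b0 * x ^ p))"
    using b0 by (intro expansion_on_mult expansion_imp_expansion_on[OF expansion_exp]
        expansion_on_const[where M = 1]) (auto simp: abs_mult power_le_one mult_le_one)
  have alpha_factors: "expansion_on {0..1}
      (\<lambda>h x. \<Prod>k=1..i. 1 - s powr c * x * exp (- (h * (real d - real i + real k))))
      (\<lambda>x. (1 - s powr c * x) ^ card {1..i})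
      (\<lambda>x. (\<Sum>k=1..i. real d - real i + real k) * (s powr c * x)
        * (1 - s powr c * x) ^ (card {1..i} - 1))"
    using s_powr_c_pos s_powr_c_le_1
    by (intro expansion_on_prod expansion_on_one_minus_mult_exp[where M = 1])
      (auto simp: abs_mult mult_le_one)
  have gamma_factors: "expansion_on {0..1} (\<lambda>h x. \<Prod>k=1..p-i. 1 - x * exp (- (h * real k)))
      (\<lambda>x. (1 - x) ^ card {1..p-i}) (\<lambda>x. (\<Sum>k=1..p-i. real k) * x * (1 - x) ^ (card {1..p-i} - 1))"
    by (intro expansion_on_prod expansion_on_one_minus_mult_exp[where M = 1]) auto
  have alpha_sum: "(\<Sum>k=1..i. real d - real i + real k) = real i * (2 * real d - real i + 1) / 2"
    unfolding sum.distrib gauss_sum_real_from_1 by (simp add: field_simps)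
  from expansion_on_mult[OF expansion_on_mult[OF prefactor alpha_factors[unfolded alpha_sum]]
      gamma_factors[unfolded gauss_sum_real_from_1]]
  show ?thesis
    by (rule expansion_on_cong) (auto simp: Q_def Q0_def Q1_def beta_def alpha_def gamma_def algebra_simps)
qed

lemma s_powr_eq: "s powr t = exp (- (lam * t))"
  and s_powr_nat_mult: "s powr (real n * t) = exp (- (lam * t)) ^ n"
  and s_powr_add: "s powr (c + t) = s powr c * exp (- (lam * t))"
  unfolding s_def by (simp_all add: exp_powr_real exp_of_nat_mult[symmetric] powr_add algebra_simps)

lemma integral_Q0: "integral {0..1} (\<lambda>t. Q0 (exp (- (lam * t)))) = A0 s c p i"
proof -
  have "Q0 (exp (- (lam * t))) = s powr (c * real (p - i)) *
      (s powr (real p * t) * (1 - s powr t) ^ (p - i) * (1 - s powr (c + t)) ^ i)" for t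
    unfolding Q0_def s_powr_nat_mult s_powr_add s_powr_eq[of t] by (simp add: algebra_simps)
  then show ?thesis
    unfolding A0_def by simp
qed

lemma integral_Q1:
  "integral {0..1} (\<lambda>t. Q1 (exp (- (lam * t))))
    = A1_1 s c d p i + A1_2 s c p i - real d * real (p - i) * A0 s c p i"
proof -
  define G0 where "G0 t = s powr (real p * t) * (1 - s powr t) ^ (p - i) * (1 - s powr (c + t)) ^ i" for t
  define G1 where
    "G1 t = s powr ((real p + 1) * t) * (1 - s powr t) ^ (p - i) * (1 - s powr (c + t)) ^ (i - 1)" for t
  define G2 where
    "G2 t = s powr ((real p + 1) * t) * (1 - s powr t) ^ (p - i - 1) * (1 - s powr (c + t)) ^ i" for t
  define b0 where "b0 = s powr (c * real (p - i))"
  define a1 where "a1 = real i * (2 * real d - real i + 1) / 2 * (b0 * s powr c)"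
  define a2 where "a2 = real (p - i) * (real (p - i) + 1) / 2 * b0"
  have Q1_eq: "Q1 (exp (- (lam * t))) = - (real d * real (p - i) * b0) * G0 t + a1 * G1 t + a2 * G2 t"
    for t
  proof -
    have "s powr ((real p + 1) * t) = exp (- (lam * t)) * exp (- (lam * t)) ^ p"
      using s_powr_nat_mult[of "Suc p" t] by (simp add: add.commute)
    then show ?thesis
      unfolding Q1_def G0_def G1_def G2_def a1_def a2_def b0_def s_powr_nat_mult s_powr_add s_powr_eq[of t]
      by (simp add: algebra_simps)
  qed
  have "G0 integrable_on {0..1}" "G1 integrable_on {0..1}" "G2 integrable_on {0..1}"
    unfolding G0_def G1_def G2_def using s_pos by (auto intro!: integrable_continuous_real continuous_intros)
  then have "((\<lambda>t. Q1 (exp (- (lam * t)))) has_integral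
      - (real d * real (p - i) * b0) * integral {0..1} G0 + a1 * integral {0..1} G1 + a2 * integral {0..1} G2)
      {0..1}"
    unfolding Q1_eq by (intro has_integral_add has_integral_mult_right integrable_integral)
  then have "integral {0..1} (\<lambda>t. Q1 (exp (- (lam * t))))
      = - (real d * real (p - i) * b0) * integral {0..1} G0 + a1 * integral {0..1} G1 + a2 * integral {0..1} G2"
    by (rule integral_unique)
  moreover have "s powr (c * (real p - real i + 1)) = b0 * s powr c"
    unfolding b0_def using i_le_p by (simp add: of_nat_diff algebra_simps flip: powr_add)
  ultimately show ?thesis
    unfolding A0_def A1_1_def A1_2_def G0_def G1_def G2_def a1_def a2_def b0_def
    by (simp add: algebra_simps)
qed

lemma expansion_integral_Q:
  "expansion (\<lambda>h. integral {0..1} (\<lambda>t. Q h (exp (- (lam * t)))))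
    (A0 s c p i) (A1_1 s c d p i + A1_2 s c p i - real d * real (p - i) * A0 s c p i)"
proof -
  have "(\<lambda>t. exp (- (lam * t))) ` {0..1} \<subseteq> {0..1}"
    using lam_pos by auto
  from expansion_on_compose[OF expansion_on_Q this]
  have "expansion (\<lambda>h. integral {0..1} (\<lambda>t. Q h (exp (- (lam * t)))))
      (integral {0..1} (\<lambda>t. Q0 (exp (- (lam * t))))) (integral {0..1} (\<lambda>t. Q1 (exp (- (lam * t)))))"
    by (rule expansion_integral[rotated])
      (auto simp: Q_def Q0_def Q1_def intro!: continuous_intros)
  then show ?thesis
    unfolding integral_Q0 integral_Q1 .
qed

definition R :: "real \<Rightarrow> real" where
  "R h = (\<Sum>m=1..2*p.
     coeff (Qpoly h) m * (1 - s ^ m) * (h / (1 - exp (- (h * real m))) - 1 / real m - h / 2))"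

lemma V_eq:
  assumes "0 < h"
  shows "V h = lam * integral {0..1} (\<lambda>t. Q h (exp (- (lam * t)))) + h / 2 * (Q h 1 - Q h s) + R h"
proof -
  define a where "a m = coeff (Qpoly h) m * (1 - s ^ m)" for m
  have "integral {0..1} (\<lambda>t. Q h (exp (- (lam * t))))
      = (\<Sum>m=1..2*p. coeff (Qpoly h) m * integral {0..1} (\<lambda>t. exp (- (lam * real m * t))))"
    unfolding Q_eq_sum_coeff exp_of_nat_mult[symmetric]
    by (subst integral_sum) (auto simp: algebra_simps intro!: integrable_continuous_real continuous_intros)
  also have "\<dots> = (\<Sum>m=1..2*p. a m / (lam * real m))"
  proof (intro sum.cong refl)
    fix m :: nat assume "m \<in> {1..2*p}"
    then have "m > 0" "lam * real m > 0"
      using lam_pos by auto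
    then have "((\<lambda>t. exp (- (lam * real m * t))) has_integral (1 - s ^ m) / (lam * real m)) {0..1}"
      unfolding s_def exp_of_nat_mult[symmetric]
      by (intro fundamental_theorem_of_calculus[where f = "\<lambda>t. - exp (- (lam * real m * t)) / (lam * real m)",
            THEN has_integral_eq_rhs]) (auto intro!: derivative_eq_intros
            simp: diff_divide_distrib mult.commute has_real_derivative_iff_has_vector_derivative[symmetric]
            has_field_derivative_at_within)
    then show "coeff (Qpoly h) m * integral {0..1} (\<lambda>t. exp (- (lam * real m * t))) = a m / (lam * real m)"
      unfolding a_def by (simp add: integral_unique)
  qed
  finally have "lam * integral {0..1} (\<lambda>t. Q h (exp (- (lam * t)))) = (\<Sum>m=1..2*p. a m / real m)"
    using lam_pos by (simp add: sum_distrib_left)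
  moreover have "Q h 1 - Q h s = (\<Sum>m=1..2*p. a m)"
    unfolding Q_eq_sum_coeff a_def by (simp add: sum_subtractf[symmetric] algebra_simps)
  moreover have "V h = (\<Sum>m=1..2*p. a m / real m + h / 2 * a m
      + a m * (h / (1 - exp (- (h * real m))) - 1 / real m - h / 2))"
    unfolding V_def a_def[symmetric]
  proof (intro sum.cong refl)
    fix m assume "m \<in> {1..2*p}"
    then have "1 - exp (- (h * real m)) \<noteq> 0" "real m \<noteq> 0"
      using assms by auto
    then show "a m * (h / (1 - exp (- (h * real m))))
        = a m / real m + h / 2 * a m + a m * (h / (1 - exp (- (h * real m))) - 1 / real m - h / 2)"
      by (simp add: field_simps)
  qed
  ultimately show ?thesis
    unfolding R_def a_def[symmetric] by (simp add: sum.distrib sum_distrib_left)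
qed

lemma R_bigo: "R \<in> O[at_right 0](\<lambda>h. h\<^sup>2)"
proof -
  have "(\<lambda>h. coeff (Qpoly h) m * (1 - s ^ m) * (h / (1 - exp (- (h * real m))) - 1 / real m - h / 2))
      \<in> O[at_right 0](\<lambda>h. 1 * h\<^sup>2)" if "m \<in> {1..2*p}" for m
  proof (rule landau_o.big.mult)
    have "\<forall>\<^sub>F h in at_right 0. norm (coeff (Qpoly h) m * (1 - s ^ m))
        \<le> (1 + exp (real i)) ^ i * 2 ^ (p - i) * norm (1::real)"
      using eventually_at_right_0_less_1
    proof eventually_elim
      case (elim h)
      have s_m: "\<bar>1 - s ^ m\<bar> \<le> 1"
        using s_pos s_less_1 by (simp add: power_le_one)
      from elim have "\<bar>coeff (Qpoly h) m\<bar> \<le> (1 + exp (real i)) ^ i * 2 ^ (p - i)"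
        by (intro abs_coeff_Qpoly_le) auto
      from abs_mult_le_mult[OF this s_m] show ?case
        by simp
    qed
    moreover have "0 < (1 + exp (real i)) ^ i * 2 ^ (p - i)"
      by (intro mult_pos_pos zero_less_power) (auto intro: add_pos_pos)
    ultimately show "(\<lambda>h. coeff (Qpoly h) m * (1 - s ^ m)) \<in> O[at_right 0](\<lambda>h. 1)"
      by (intro landau_o.bigI[of "(1 + exp (real i)) ^ i * 2 ^ (p - i)"])
    show "(\<lambda>h. h / (1 - exp (- (h * real m))) - 1 / real m - h / 2) \<in> O[at_right 0](power2)"
      using expansion_div_one_minus_exp[of "real m"] that unfolding expansion_def by simp
  qed
  then show ?thesis
    unfolding R_def by (auto intro: big_sum_in_bigo)
qed

lemma expansion_V:
  "expansion V (lam * A0 s c p i)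
    (lam * (A1_1 s c d p i + A1_2 s c p i - real d * real (p - i) * A0 s c p i) + (Q0 1 - Q0 s) / 2)"
proof -
  have Q_1_s: "expansion (\<lambda>h. Q h 1 - Q h s) (Q0 1 - Q0 s) (Q1 1 - Q1 s)"
    using s_pos s_less_1 by (intro expansion_diff expansion_on_at_point[OF expansion_on_Q]) auto
  have "expansion R 0 0"
    unfolding expansion_def using R_bigo by simp
  with expansion_mult[OF expansion_const expansion_integral_Q]
    expansion_mult[OF expansion_linear Q_1_s]
  have "expansion
      (\<lambda>h. lam * integral {0..1} (\<lambda>t. Q h (exp (- (lam * t)))) + h * (1 / 2) * (Q h 1 - Q h s) + R h)
      (lam * A0 s c p i + 0 * (Q0 1 - Q0 s) + 0)
      (lam * (A1_1 s c d p i + A1_2 s c p i - real d * real (p - i) * A0 s c p i) + 0 * A0 s c p i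
        + (0 * (Q1 1 - Q1 s) + 1 / 2 * (Q0 1 - Q0 s)) + 0)"
    by (intro expansion_add)
  then show ?thesis
    by (rule expansion_cong) (auto simp: V_eq)
qed

lemma expansion_W: "expansion W 1 ((real i * (real i + 1) + real (p - i) * (real (p - i) + 1)) / 4)"
proof -
  have factor: "expansion (\<lambda>h. h * real k / (1 - exp (- (h * real k)))) 1 (real k / 2)"
    if "k \<ge> 1" for k
  proof -
    from that have "0 < real k"
      by simp
    from expansion_mult[OF expansion_const[of "real k"] expansion_div_one_minus_exp[OF this]] show ?thesis
      by (rule expansion_cong) (use that in auto)
  qed
  have "expansion (\<lambda>h. \<Prod>k=1..n. h * real k / (1 - exp (- (h * real k))))
      1 (real n * (real n + 1) / 4)" for n
  proof -
    have sum_eq: "(\<Sum>k=1..n. real k / 2) = real n * (real n + 1) / 4"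
      unfolding sum_divide_distrib[symmetric] gauss_sum_real_from_1 by simp
    have "expansion (\<lambda>h. \<Prod>k=1..n. h * real k / (1 - exp (- (h * real k)))) 1 (\<Sum>k=1..n. real k / 2)"
      by (rule expansion_prod) (auto intro: factor)
    then show ?thesis
      unfolding sum_eq .
  qed
  from expansion_mult[OF this this] show ?thesis
    unfolding W_def by (rule expansion_cong) (auto simp: field_simps)
qed

lemma Q0_1: "Q0 1 = (1 - s powr c) ^ p * (if i = p then 1 else 0)"
  unfolding Q0_def using i_le_p s_pos by auto

lemma Q0_s: "Q0 s = s powr (real p + c * real (p - i)) * (1 - s powr (c + 1)) ^ i * (1 - s) ^ (p - i)"
  unfolding Q0_def using s_pos by (simp add: powr_add powr_realpow algebra_simps)

lemma expansion_W_V: "expansion (\<lambda>h. W h * V h) (B0 lam c p i) (B1 lam c d p i)"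
  using expansion_mult[OF expansion_W expansion_V]
proof (rule expansion_cong)
  show "1 * (lam * A0 s c p i) = B0 lam c p i"
    unfolding B0_def s_def by simp
  have "real (p - i) = real p - real i"
    using i_le_p by simp
  then show "1 * (lam * (A1_1 s c d p i + A1_2 s c p i - real d * real (p - i) * A0 s c p i)
        + (Q0 1 - Q0 s) / 2)
      + (real i * (real i + 1) + real (p - i) * (real (p - i) + 1)) / 4 * (lam * A0 s c p i)
      = B1 lam c d p i"
    unfolding B1_def A1_3_def Let_def s_def[symmetric] Q0_1 Q0_s
    by (simp add: field_simps power2_eq_square)
qed simp

lemma sum_fcd_remainder_bigo:
  "(\<lambda>N. (lam / real N) ^ (p + 1) * (fact i * fact (p - i))
      * (\<Sum>j<N. fcd (exp (- lam / real N)) N c d p i (real j))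
      - B0 lam c p i - B1 lam c d p i * (lam / real N)) \<in> O(\<lambda>N. 1 / (real N)\<^sup>2)"
proof -
  from expansion_W_V filterlim_div_real_at_right_0[OF lam_pos]
  have "(\<lambda>N. W (lam / real N) * V (lam / real N) - B0 lam c p i - lam / real N * B1 lam c d p i)
      \<in> O(\<lambda>N. (lam / real N)\<^sup>2)"
    unfolding expansion_def by (rule landau_o.big.compose)
  moreover have "\<forall>\<^sub>F N in sequentially.
      W (lam / real N) * V (lam / real N) - B0 lam c p i - lam / real N * B1 lam c d p i
      = (lam / real N) ^ (p + 1) * (fact i * fact (p - i))
        * (\<Sum>j<N. fcd (exp (- lam / real N)) N c d p i (real j))
        - B0 lam c p i - B1 lam c d p i * (lam / real N)"
    using eventually_gt_at_top[of 0]
  proof eventually_elim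
    case (elim N)
    from sum_fcd_eq_W_V[OF elim refl] show ?case
      by simp
  qed
  ultimately have "(\<lambda>N. (lam / real N) ^ (p + 1) * (fact i * fact (p - i))
      * (\<Sum>j<N. fcd (exp (- lam / real N)) N c d p i (real j))
      - B0 lam c p i - B1 lam c d p i * (lam / real N)) \<in> O(\<lambda>N. (lam / real N)\<^sup>2)"
    by (rule landau_o.big.in_cong[THEN iffD1, rotated])
  also note square_div_real_bigo[OF lam_pos]
  finally show ?thesis .
qed

end

theorem lemma2p9:
  fixes c lam :: real and d p i :: nat
  assumes "c \<ge> 0" and "lam > 0" and "p \<ge> 1" and "i \<le> p"
  shows "\<exists>E :: nat \<Rightarrow> real. E \<in> O(\<lambda>N. 1 / (real N)^2) \<and>
    (\<forall>\<^sub>F N in sequentially.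
       (\<Sum>j<N. fcd (exp (- lam / real N)) N c d p i (real j))
       = (real N / lam) ^ (p + 1) * (1 / (fact i * fact (p - i)))
         * (B0 lam c p i + B1 lam c d p i * (lam / real N) + E N))"
proof -
  interpret qbinomial_sum c lam d p i
    using assms by unfold_locales
  define E where "E N = (lam / real N) ^ (p + 1) * (fact i * fact (p - i))
    * (\<Sum>j<N. fcd (exp (- lam / real N)) N c d p i (real j))
    - B0 lam c p i - B1 lam c d p i * (lam / real N)" for N
  have "E \<in> O(\<lambda>N. 1 / (real N)\<^sup>2)"
    unfolding E_def by (rule sum_fcd_remainder_bigo)
  moreover have "\<forall>\<^sub>F N in sequentially.
      (\<Sum>j<N. fcd (exp (- lam / real N)) N c d p i (real j))
      = (real N / lam) ^ (p + 1) * (1 / (fact i * fact (p - i)))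
        * (B0 lam c p i + B1 lam c d p i * (lam / real N) + E N)"
    using eventually_gt_at_top[of 0]
    by eventually_elim (use assms(2) in \<open>simp add: E_def power_divide field_simps\<close>)
  ultimately show ?thesis
    by blast
qed

end
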